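(* For every integer $n\geqslant 2$, $\mathbf{I}\mathbb{N}_{\infty}^n$ is an $E$-unitary inverse semigroup.
   Context: $\mathbb{N}=\{1,2,3,\ldots\}$ and $\mathbb{N}^n$ carries the Euclidean metric $d$. A partial isometry of $\mathbb{N}^n$ is an injective partial map $\alpha\colon\mathbb{N}^n\rightharpoonup\mathbb{N}^n$ with $d((\mathbf{x})\alpha,(\mathbf{y})\alpha)=d(\mathbf{x},\mathbf{y})$ for all $\mathbf{x},\mathbf{y}\in\operatorname{dom}\alpha$; it is cofinite if $\mathbb{N}^n\setminus\operatorname{dom}\alpha$ and $\mathbb{N}^n\setminus\operatorname{ran}\alpha$ are finite. $\mathbf{I}\mathbb{N}_{\infty}^n$ is the monoid of all partial cofinite isometries of $\mathbb{N}^n$ under composition of partial maps. An inverse semigroup $S$ is $E$-unitary if whenever $e$ is an idempotent, $s\in S$ and $e\preccurlyeq s$ (natural partial order: $a\preccurlyeq b$ iff $a=bf$ for some idempotent $f$), then $s$ is an idempotent. *)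

theory Defs
  imports Complex_Main
begin

definition Pts :: "nat \<Rightarrow> nat list set" where
  "Pts n = {xs. length xs = n \<and> (\<forall>x\<in>set xs. 1 \<le> x)}"

definition edist :: "nat list \<Rightarrow> nat list \<Rightarrow> real" where
  "edist xs ys = sqrt (\<Sum>i<length xs. (real (xs ! i) - real (ys ! i))^2)"

definition partial_isometry :: "nat \<Rightarrow> (nat list \<rightharpoonup> nat list) \<Rightarrow> bool" where
  "partial_isometry n \<alpha> \<longleftrightarrow>
     dom \<alpha> \<subseteq> Pts n \<and> ran \<alpha> \<subseteq> Pts n \<and> inj_on \<alpha> (dom \<alpha>) \<and>
     (\<forall>x\<in>dom \<alpha>. \<forall>y\<in>dom \<alpha>. edist (the (\<alpha> x)) (the (\<alpha> y)) = edist x y)"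

definition cofinite_pmap :: "nat \<Rightarrow> (nat list \<rightharpoonup> nat list) \<Rightarrow> bool" where
  "cofinite_pmap n \<alpha> \<longleftrightarrow> finite (Pts n - dom \<alpha>) \<and> finite (Pts n - ran \<alpha>)"

definition INinf :: "nat \<Rightarrow> (nat list \<rightharpoonup> nat list) set" where
  "INinf n = {\<alpha>. partial_isometry n \<alpha> \<and> cofinite_pmap n \<alpha>}"

text \<open>Composition written on the right as in the paper: (x)(\<alpha>\<beta>) = ((x)\<alpha>)\<beta>.\<close>
definition pcomp :: "('a \<rightharpoonup> 'a) \<Rightarrow> ('a \<rightharpoonup> 'a) \<Rightarrow> ('a \<rightharpoonup> 'a)" where
  "pcomp \<alpha> \<beta> = \<beta> \<circ>\<^sub>m \<alpha>"

definition semigroup_on :: "'s set \<Rightarrow> ('s \<Rightarrow> 's \<Rightarrow> 's) \<Rightarrow> bool" where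
  "semigroup_on S m \<longleftrightarrow> (\<forall>a\<in>S. \<forall>b\<in>S. m a b \<in> S) \<and>
     (\<forall>a\<in>S. \<forall>b\<in>S. \<forall>c\<in>S. m (m a b) c = m a (m b c))"

definition inverse_semigroup_on :: "'s set \<Rightarrow> ('s \<Rightarrow> 's \<Rightarrow> 's) \<Rightarrow> bool" where
  "inverse_semigroup_on S m \<longleftrightarrow> semigroup_on S m \<and>
     (\<forall>a\<in>S. \<exists>!b. b \<in> S \<and> m (m a b) a = a \<and> m (m b a) b = b)"

definition idempotent_in :: "'s set \<Rightarrow> ('s \<Rightarrow> 's \<Rightarrow> 's) \<Rightarrow> 's \<Rightarrow> bool" where
  "idempotent_in S m e \<longleftrightarrow> e \<in> S \<and> m e e = e"

definition nat_le :: "'s set \<Rightarrow> ('s \<Rightarrow> 's \<Rightarrow> 's) \<Rightarrow> 's \<Rightarrow> 's \<Rightarrow> bool" where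
  "nat_le S m a b \<longleftrightarrow> (\<exists>f. idempotent_in S m f \<and> a = m b f)"

definition E_unitary :: "'s set \<Rightarrow> ('s \<Rightarrow> 's \<Rightarrow> 's) \<Rightarrow> bool" where
  "E_unitary S m \<longleftrightarrow> (\<forall>e s. idempotent_in S m e \<and> s \<in> S \<and> nat_le S m e s
       \<longrightarrow> idempotent_in S m s)"

end

theory Submission
  imports Defs
begin

text \<open>A set of partial injections closed under composition and partial inversion is an
inverse semigroup whose idempotents are the partial identities, so an element \<open>s\<close> above an
idempotent \<open>e\<close> fixes \<open>dom e\<close> pointwise. For cofinite partial isometries of \<open>\<nat>\<^sup>n\<close> the
set \<open>dom e\<close> is cofinite, and a point of \<open>\<nat>\<^sup>n\<close> is determined by its distances to all but
finitely many points; as \<open>s p\<close> and \<open>p\<close> have the same distance to every point fixed by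
\<open>s\<close>, \<open>s\<close> is a partial identity, hence idempotent. The argument works in every dimension.\<close>

lemma pcomp_Some_iff: "pcomp a b x = Some z \<longleftrightarrow> (\<exists>y. a x = Some y \<and> b y = Some z)"
  by (simp add: pcomp_def map_comp_Some_iff)

lemma pcomp_assoc: "pcomp (pcomp a b) c = pcomp a (pcomp b c)"
  by (rule ext) (auto simp: pcomp_def map_comp_def split: option.splits)

lemma inj_on_dom_Some_eq: "inj_on a (dom a) \<Longrightarrow> a x = Some z \<Longrightarrow> a y = Some z \<Longrightarrow> x = y"
  by (metis domI inj_on_def)

definition pinv :: "('a \<rightharpoonup> 'b) \<Rightarrow> ('b \<rightharpoonup> 'a)" where
  "pinv a = (\<lambda>y. if y \<in> ran a then Some (SOME x. a x = Some y) else None)"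

lemma pinv_Some_iff:
  assumes "inj_on a (dom a)"
  shows "pinv a y = Some x \<longleftrightarrow> a x = Some y"
proof
  assume h: "pinv a y = Some x"
  then have "y \<in> ran a" by (auto simp: pinv_def split: if_splits)
  then have "a (SOME x. a x = Some y) = Some y" by (auto simp: ran_def intro: someI)
  with h show "a x = Some y" by (auto simp: pinv_def split: if_splits)
next
  assume h: "a x = Some y"
  then have "a (SOME x. a x = Some y) = Some y" by (rule someI)
  with h have "(SOME x. a x = Some y) = x" using inj_on_dom_Some_eq[OF assms] by blast
  with h show "pinv a y = Some x" by (auto simp: pinv_def ran_def)
qed

lemma dom_pinv: "dom (pinv a) = ran a"
  by (auto simp: pinv_def split: if_splits)

lemma ran_pinv: "inj_on a (dom a) \<Longrightarrow> ran (pinv a) = dom a"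
  by (auto simp: ran_def pinv_Some_iff)

lemma inj_on_dom_pinv: "inj_on a (dom a) \<Longrightarrow> inj_on (pinv a) (dom (pinv a))"
  by (rule inj_onI) (metis domD pinv_Some_iff option.inject)

lemma pcomp_pinv_pcomp:
  assumes "inj_on a (dom a)"
  shows "pcomp (pcomp a (pinv a)) a = a"
proof
  fix x
  show "pcomp (pcomp a (pinv a)) a x = a x"
    using assms by (cases "a x") (auto simp: pcomp_def pinv_Some_iff)
qed

lemma pinv_pcomp_pinv:
  assumes "inj_on a (dom a)"
  shows "pcomp (pcomp (pinv a) a) (pinv a) = pinv a"
proof
  fix y
  show "pcomp (pcomp (pinv a) a) (pinv a) y = pinv a y"
    using assms by (cases "pinv a y") (auto simp: pcomp_def pinv_Some_iff)
qed

lemma pinv_unique: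
  assumes inj_a: "inj_on a (dom a)" and inj_b: "inj_on b (dom b)"
    and aba: "pcomp (pcomp a b) a = a" and bab: "pcomp (pcomp b a) b = b"
  shows "b = pinv a"
proof
  fix y
  show "b y = pinv a y"
  proof (cases "b y")
    case None
    have "y \<notin> ran a"
    proof
      assume "y \<in> ran a"
      then obtain x where x: "a x = Some y" by (auto simp: ran_def)
      with None have "pcomp (pcomp a b) a x = None" by (simp add: pcomp_def)
      with aba x show False by simp
    qed
    with None show ?thesis by (simp add: pinv_def)
  next
    case (Some x)
    with bab have "pcomp (pcomp b a) b y = Some x" by simp
    with Some obtain y' where "a x = Some y'" "b y' = Some x"
      by (auto simp: pcomp_Some_iff)
    with Some inj_on_dom_Some_eq[OF inj_b] have "a x = Some y" by metis
    with Some show ?thesis using pinv_Some_iff[OF inj_a] by metis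
  qed
qed

lemma inverse_semigroup_on_pcomp:
  assumes inj: "\<And>a. a \<in> S \<Longrightarrow> inj_on a (dom a)"
    and pcomp_closed: "\<And>a b. a \<in> S \<Longrightarrow> b \<in> S \<Longrightarrow> pcomp a b \<in> S"
    and pinv_closed: "\<And>a. a \<in> S \<Longrightarrow> pinv a \<in> S"
  shows "inverse_semigroup_on S pcomp"
  unfolding inverse_semigroup_on_def semigroup_on_def
proof (intro conjI ballI)
  fix a assume a: "a \<in> S"
  show "\<exists>!b. b \<in> S \<and> pcomp (pcomp a b) a = a \<and> pcomp (pcomp b a) b = b"
  proof (rule ex1I[of _ "pinv a"])
    show "pinv a \<in> S \<and> pcomp (pcomp a (pinv a)) a = a \<and> pcomp (pcomp (pinv a) a) (pinv a) = pinv a"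
      using a pinv_closed inj pcomp_pinv_pcomp pinv_pcomp_pinv by blast
  qed (use a inj pinv_unique in blast)
qed (simp_all add: pcomp_closed pcomp_assoc)

lemma ran_pcomp:
  assumes "inj_on a (dom a)" "inj_on b (dom b)"
  shows "ran (pcomp a b) = dom (pcomp (pinv b) (pinv a))"
  using assms by (simp add: ran_def dom_def pcomp_Some_iff pinv_Some_iff) blast

lemma finite_diff_dom_pcomp:
  assumes inj_a: "inj_on a (dom a)" and ran_a: "ran a \<subseteq> P"
    and fin_a: "finite (P - dom a)" and fin_b: "finite (P - dom b)"
  shows "finite (P - dom (pcomp a b))"
proof -
  let ?S = "{x \<in> dom a. the (a x) \<notin> dom b}"
  have "inj_on (\<lambda>x. the (a x)) ?S"
    using inj_on_dom_Some_eq[OF inj_a] by (fastforce intro: inj_onI)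
  moreover have "(\<lambda>x. the (a x)) ` ?S \<subseteq> P - dom b"
    using ran_a by (auto simp: ran_def)
  ultimately have "finite ?S"
    using fin_b finite_imageD finite_subset by blast
  moreover have "P - dom (pcomp a b) \<subseteq> (P - dom a) \<union> ?S"
    by (auto simp: pcomp_def map_comp_def split: option.splits)
  ultimately show ?thesis
    using fin_a finite_subset by blast
qed

lemma idempotent_pcomp_Some:
  assumes "inj_on e (dom e)" "pcomp e e = e" "e x = Some y"
  shows "y = x"
proof -
  from assms(2,3) have "pcomp e e x = Some y" by simp
  with assms(3) have "e y = Some y" by (simp add: pcomp_Some_iff)
  with assms(1) show "y = x" using assms(3) by (rule inj_on_dom_Some_eq)
qed

lemma pcomp_self_if_fixes_dom:
  assumes "\<forall>x\<in>dom s. s x = Some x"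
  shows "pcomp s s = s"
proof
  fix x
  show "pcomp s s x = s x"
  proof (cases "x \<in> dom s")
    case True
    with assms have "s x = Some x" by blast
    then show ?thesis by (simp add: pcomp_def)
  qed (simp add: pcomp_def domIff)
qed

lemma E_unitary_pcompI:
  assumes inj: "\<And>a. a \<in> S \<Longrightarrow> inj_on a (dom a)"
    and rigid: "\<And>s e. s \<in> S \<Longrightarrow> e \<in> S \<Longrightarrow> (\<forall>x\<in>dom e. s x = Some x) \<Longrightarrow>
                  \<forall>x\<in>dom s. s x = Some x"
  shows "E_unitary S pcomp"
  unfolding E_unitary_def
proof (intro allI impI)
  fix e s assume "idempotent_in S pcomp e \<and> s \<in> S \<and> nat_le S pcomp e s"
  then obtain f where e: "e \<in> S" "pcomp e e = e" and s: "s \<in> S"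
    and f: "f \<in> S" "pcomp f f = f" and e_eq: "e = pcomp s f"
    by (auto simp: idempotent_in_def nat_le_def)
  have "s x = Some x" if "x \<in> dom e" for x
  proof -
    from that obtain y where y: "e x = Some y" by auto
    with e_eq obtain z where z: "s x = Some z" "f z = Some y"
      by (metis pcomp_Some_iff)
    have "y = x" using idempotent_pcomp_Some[OF inj[OF e(1)] e(2) y] .
    moreover have "y = z" using idempotent_pcomp_Some[OF inj[OF f(1)] f(2) z(2)] .
    ultimately show ?thesis using z by simp
  qed
  then have "pcomp s s = s"
    using rigid[OF s e(1)] by (blast intro: pcomp_self_if_fixes_dom)
  with s show "idempotent_in S pcomp s" by (simp add: idempotent_in_def)
qed

lemma edist_sq_Suc_update:
  assumes "j < length p" "j < length x"
  shows "(edist p (x[j := Suc (x ! j)]))\<^sup>2 = (edist p x)\<^sup>2 - 2 * (real (p ! j) - real (x ! j)) + 1"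
proof -
  let ?x' = "x[j := Suc (x ! j)]"
  let ?I = "{..<length p}"
  have j: "j \<in> ?I" using assms(1) by simp
  have "(edist p ?x')\<^sup>2 = (\<Sum>i\<in>?I. (real (p ! i) - real (?x' ! i))\<^sup>2)"
    by (simp add: edist_def sum_nonneg)
  also have "\<dots> = (real (p ! j) - real (x ! j) - 1)\<^sup>2 + (\<Sum>i\<in>?I - {j}. (real (p ! i) - real (x ! i))\<^sup>2)"
    using j assms(2) by (simp add: sum.remove diff_diff_eq add.commute)
  also have "\<dots> = (\<Sum>i\<in>?I. (real (p ! i) - real (x ! i))\<^sup>2) - 2 * (real (p ! j) - real (x ! j)) + 1"
    using j by (simp add: sum.remove power2_diff)
  also have "\<dots> = (edist p x)\<^sup>2 - 2 * (real (p ! j) - real (x ! j)) + 1"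
    by (simp add: edist_def sum_nonneg)
  finally show ?thesis .
qed

lemma Pts_eq_if_edist_eq_cofinite:
  assumes p: "p \<in> Pts n" and q: "q \<in> Pts n" and F: "finite F"
    and eq: "\<And>x. x \<in> Pts n - F \<Longrightarrow> edist p x = edist q x"
  shows "p = q"
proof (rule nth_equalityI)
  have len: "length p = n" "length q = n" using p q by (auto simp: Pts_def)
  then show "length p = length q" by simp
  obtain M where M: "\<forall>x\<in>F. \<forall>y\<in>set x. y < M"
    using F by (metis finite_UN_I finite_nat_set_iff_bounded finite_set UN_iff)
  fix j assume "j < length p"
  with len have j: "j < n" by simp
  define x0 where "x0 = replicate n (Suc M)"
  define x1 where "x1 = x0[j := Suc (x0 ! j)]"
  have "x0 \<in> Pts n - F"
    using j M by (fastforce simp: x0_def Pts_def)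
  then have e0: "edist p x0 = edist q x0" by (rule eq)
  have "x1 \<in> Pts n - F"
  proof -
    have "set x1 \<subseteq> {Suc M, Suc (Suc M)}" "Suc (Suc M) \<in> set x1" "length x1 = n"
      using j set_update_subset_insert[of x0 j] by (auto simp: x1_def x0_def set_update_memI)
    with M show ?thesis by (fastforce simp: Pts_def)
  qed
  then have e1: "edist p x1 = edist q x1" by (rule eq)
  have "j < length x0" using j by (simp add: x0_def)
  then have "(edist p x1)\<^sup>2 = (edist p x0)\<^sup>2 - 2 * (real (p ! j) - real (x0 ! j)) + 1"
    and "(edist q x1)\<^sup>2 = (edist q x0)\<^sup>2 - 2 * (real (q ! j) - real (x0 ! j)) + 1"
    using j len unfolding x1_def by (simp_all add: edist_sq_Suc_update)
  with e0 e1 show "p ! j = q ! j" by simp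
qed

lemma inj_on_dom_pcomp:
  assumes "inj_on a (dom a)" "inj_on b (dom b)"
  shows "inj_on (pcomp a b) (dom (pcomp a b))"
proof (rule inj_onI)
  fix x y assume "x \<in> dom (pcomp a b)" "pcomp a b x = pcomp a b y"
  then obtain z where "pcomp a b x = Some z" "pcomp a b y = Some z" by force
  then obtain u v where "a x = Some u" "b u = Some z" "a y = Some v" "b v = Some z"
    by (auto simp: pcomp_Some_iff)
  with assms show "x = y" by (metis inj_on_dom_Some_eq)
qed

lemma partial_isometry_pcomp:
  assumes a: "partial_isometry n a" and b: "partial_isometry n b"
  shows "partial_isometry n (pcomp a b)"
  unfolding partial_isometry_def
proof (intro conjI ballI)
  show "dom (pcomp a b) \<subseteq> Pts n" "ran (pcomp a b) \<subseteq> Pts n"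
    using a b by (auto simp: partial_isometry_def pcomp_Some_iff ran_def dom_def)
  show "inj_on (pcomp a b) (dom (pcomp a b))"
    using a b by (simp add: partial_isometry_def inj_on_dom_pcomp)
next
  fix x y assume "x \<in> dom (pcomp a b)" "y \<in> dom (pcomp a b)"
  then obtain u v w z where ax: "a x = Some u" and bu: "b u = Some w"
    and ay: "a y = Some v" and bv: "b v = Some z"
    by (auto simp: pcomp_Some_iff)
  have "edist w z = edist u v"
    using b bu bv unfolding partial_isometry_def by (metis domI option.sel)
  also have "\<dots> = edist x y"
    using a ax ay unfolding partial_isometry_def by (metis domI option.sel)
  finally show "edist (the (pcomp a b x)) (the (pcomp a b y)) = edist x y"
    using ax bu ay bv by (simp add: pcomp_def)
qed

lemma partial_isometry_pinv:
  assumes a: "partial_isometry n a"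
  shows "partial_isometry n (pinv a)"
  unfolding partial_isometry_def
proof (intro conjI ballI)
  have inj: "inj_on a (dom a)" using a by (simp add: partial_isometry_def)
  then show "inj_on (pinv a) (dom (pinv a))" by (rule inj_on_dom_pinv)
  show "dom (pinv a) \<subseteq> Pts n" "ran (pinv a) \<subseteq> Pts n"
    using a inj by (simp_all add: partial_isometry_def dom_pinv ran_pinv)
  fix x y assume "x \<in> dom (pinv a)" "y \<in> dom (pinv a)"
  then obtain u v where "pinv a x = Some u" "pinv a y = Some v" by auto
  with inj have "a u = Some x" "a v = Some y" "pinv a x = Some u" "pinv a y = Some v"
    by (simp_all add: pinv_Some_iff)
  with a show "edist (the (pinv a x)) (the (pinv a y)) = edist x y"
    unfolding partial_isometry_def by force
qed

lemma cofinite_pmap_pcomp: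
  assumes a: "partial_isometry n a" "cofinite_pmap n a"
    and b: "partial_isometry n b" "cofinite_pmap n b"
  shows "cofinite_pmap n (pcomp a b)"
proof -
  have inj: "inj_on a (dom a)" "inj_on b (dom b)"
    and sub: "ran a \<subseteq> Pts n" "dom b \<subseteq> Pts n"
    and fin: "finite (Pts n - dom a)" "finite (Pts n - ran a)"
             "finite (Pts n - dom b)" "finite (Pts n - ran b)"
    using a b by (auto simp: partial_isometry_def cofinite_pmap_def)
  have "finite (Pts n - dom (pcomp a b))"
    using finite_diff_dom_pcomp inj(1) sub(1) fin(1,3) .
  moreover have "finite (Pts n - dom (pcomp (pinv b) (pinv a)))"
  proof (rule finite_diff_dom_pcomp)
    show "inj_on (pinv b) (dom (pinv b))" using inj(2) by (rule inj_on_dom_pinv)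
  qed (use inj(2) sub(2) fin(4,2) in \<open>simp_all add: dom_pinv ran_pinv\<close>)
  ultimately show ?thesis
    by (simp add: cofinite_pmap_def ran_pcomp inj)
qed

lemma cofinite_pmap_pinv:
  "inj_on a (dom a) \<Longrightarrow> cofinite_pmap n a \<Longrightarrow> cofinite_pmap n (pinv a)"
  by (auto simp: cofinite_pmap_def dom_pinv ran_pinv)

lemma INinf_inj_on_dom: "a \<in> INinf n \<Longrightarrow> inj_on a (dom a)"
  by (simp add: INinf_def partial_isometry_def)

lemma INinf_pcomp: "a \<in> INinf n \<Longrightarrow> b \<in> INinf n \<Longrightarrow> pcomp a b \<in> INinf n"
  by (simp add: INinf_def partial_isometry_pcomp cofinite_pmap_pcomp)

lemma INinf_pinv: "a \<in> INinf n \<Longrightarrow> pinv a \<in> INinf n"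
  by (simp add: INinf_def partial_isometry_pinv cofinite_pmap_pinv INinf_inj_on_dom)

lemma INinf_fixing_cofinite_is_partial_identity:
  assumes s: "s \<in> INinf n" and A: "finite (Pts n - A)" and fix_A: "\<forall>x\<in>A. s x = Some x"
    and p: "p \<in> dom s"
  shows "s p = Some p"
proof -
  obtain q where q: "s p = Some q" using p by auto
  have iso: "\<And>x y. x \<in> dom s \<Longrightarrow> y \<in> dom s \<Longrightarrow> edist (the (s x)) (the (s y)) = edist x y"
    and "dom s \<subseteq> Pts n" "ran s \<subseteq> Pts n"
    using s by (auto simp: INinf_def partial_isometry_def)
  have "p = q"
  proof (rule Pts_eq_if_edist_eq_cofinite[OF _ _ A])
    show "p \<in> Pts n" "q \<in> Pts n"
      using p q \<open>dom s \<subseteq> Pts n\<close> \<open>ran s \<subseteq> Pts n\<close> by (auto intro: ranI)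
    fix x assume "x \<in> Pts n - (Pts n - A)"
    with fix_A have "s x = Some x" by simp
    with iso[OF p, of x] q show "edist p x = edist q x" by (simp add: domI)
  qed
  with q show ?thesis by simp
qed

theorem corollary4:
  fixes n :: nat
  assumes "n \<ge> 2"
  shows "inverse_semigroup_on (INinf n) pcomp \<and> E_unitary (INinf n) pcomp"
proof
  show "inverse_semigroup_on (INinf n) pcomp"
    by (rule inverse_semigroup_on_pcomp) (simp_all add: INinf_inj_on_dom INinf_pcomp INinf_pinv)
  show "E_unitary (INinf n) pcomp"
  proof (rule E_unitary_pcompI)
    fix s e assume "s \<in> INinf n" "e \<in> INinf n" "\<forall>x\<in>dom e. s x = Some x"
    then show "\<forall>x\<in>dom s. s x = Some x"
      by (auto simp: INinf_def cofinite_pmap_def intro: INinf_fixing_cofinite_is_partial_identity)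
  qed (rule INinf_inj_on_dom)
qed

end
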